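(* Assume the standing setting and that $\|R\|\rho^a<1$. Let $\vartheta:=-\lambda/|\lambda|$ and $\delta\in\,]0,\arccos(\|R\|\rho^a)[$. Then: (i) for every $p_0=(z_0,w_0)\in\tilde{\mathcal U}$, the searchlight beam $S(z_0,\vartheta,\delta)$ is a stability beam for $p_0$; (ii) for every integral curve of $\mathcal E^*X_R$ of the form $t\mapsto(z_0+t\theta,w(t))$ with $t\ge0$, $\theta\in\mathbb S^1$, $w(0)=w_0$, staying in $\tilde{\mathcal U}$, the following estimates hold. If $\operatorname{Re}\theta\neq0$, $$\Big|w(t)-w_0-t\frac\theta\lambda\Big|\le\frac{e^{a\operatorname{Re}z_0}}{|\lambda\operatorname{Re}\theta|\,a}\,\|R\|\,\big|1-e^{at\operatorname{Re}\theta}\big|,$$ and if $\operatorname{Re}\theta=0$, $$\Big|w(t)-w_0-t\frac\theta\lambda\Big|\le\frac{e^{a\operatorname{Re}z_0}}{|\lambda|}\,t\,\|R\|.$$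
   Context: Standing setting: $\lambda\in\mathbb C\setminus\{0\}$, $a$ is a positive integer, $R\in x^a\mathbb C\{x,y\}$, and $X_R=\lambda x\partial_x+(1+R)y\partial_y$. The polydisc $\mathcal U=\rho\mathbb D\times r\mathbb D$ is one on which $R$ is holomorphic and bounded with $\sup_{\mathcal U}|R|<1$, and $\|R\|:=\sup_{\mathcal U}|R/x^a|$. Write $\mathcal E(z,w)=(e^z,e^w)$ and $\tilde{\mathcal U}=\{\operatorname{Re}z<\ln\rho,\ \operatorname{Re}w<\ln r\}$. The field $\mathcal E^*X_R=\lambda\partial_z+(1+R\circ\mathcal E)\partial_w$ defines the foliation $\tilde{\mathcal F}$; $\tilde{\mathcal L}_p$ is its leaf through $p$, and $\Pi(z,w)=z$. For $v$ with $\operatorname{Re}v<\ln\rho$, $0<\delta<\pi$ and $\vartheta\in\mathbb S^1$, the searchlight beam is $S(v,\vartheta,\delta):=\{z:\operatorname{Re}z<\ln\rho,\ |\arg(z-v)-\arg\vartheta|<\delta\}$. When $v=\Pi(p_0)$, it is called a stability beam (for $p_0$) if the following holds: for every $\theta\in\mathbb S^1$ with $|\arg(\theta/\vartheta)|<\delta$, the lift in $\tilde{\mathcal L}_{p_0}$, starting at $p_0$, of the ray $t\ge0\mapsto v+t\theta$ has a $w$-coordinate whose real part is decreasing in $t$. In particular the ray lifts entirely in $\tilde{\mathcal L}_{p_0}$ as long as it stays in $\{\operatorname{Re}z<\ln\rho\}$. *)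

theory Defs
  imports "HOL-Analysis.Analysis"
begin

definition polydisc :: "real \<Rightarrow> real \<Rightarrow> (complex \<times> complex) set" where
  "polydisc \<rho> r = ball 0 \<rho> \<times> ball 0 r"

definition holomorphic2 :: "(complex \<Rightarrow> complex \<Rightarrow> complex) \<Rightarrow> (complex \<times> complex) set \<Rightarrow> bool" where
  "holomorphic2 f S \<longleftrightarrow>
     (\<forall>p\<in>S. \<exists>A B. ((\<lambda>q. f (fst q) (snd q)) has_derivative
                      (\<lambda>h. A * fst h + B * snd h)) (at p))"

definition standing_setting ::
  "complex \<Rightarrow> nat \<Rightarrow> (complex \<Rightarrow> complex \<Rightarrow> complex) \<Rightarrow> real \<Rightarrow> real \<Rightarrow> bool" where
  "standing_setting lam a R \<rho> r \<longleftrightarrow>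
     lam \<noteq> 0 \<and> 0 < a \<and> 0 < \<rho> \<and> 0 < r \<and>
     holomorphic2 R (polydisc \<rho> r) \<and>
     (\<exists>G. holomorphic2 G (polydisc \<rho> r) \<and>
          (\<forall>(x, y)\<in>polydisc \<rho> r. R x y = x ^ a * G x y)) \<and>
     bdd_above ((\<lambda>(x, y). cmod (R x y)) ` polydisc \<rho> r) \<and>
     (SUP (x, y)\<in>polydisc \<rho> r. cmod (R x y)) < 1 \<and>
     bdd_above ((\<lambda>(x, y). cmod (R x y / x ^ a)) ` {(x, y)\<in>polydisc \<rho> r. x \<noteq> 0})"

definition normR :: "nat \<Rightarrow> (complex \<Rightarrow> complex \<Rightarrow> complex) \<Rightarrow> real \<Rightarrow> real \<Rightarrow> real" where
  "normR a R \<rho> r = (SUP (x, y)\<in>{(x, y)\<in>polydisc \<rho> r. x \<noteq> 0}. cmod (R x y / x ^ a))"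

definition Utilde :: "real \<Rightarrow> real \<Rightarrow> (complex \<times> complex) set" where
  "Utilde \<rho> r = {(z, w). Re z < ln \<rho> \<and> Re w < ln r}"

text \<open>w is a lift, on the parameter set I (containing 0), of the ray
  t \<mapsto> z0 + t theta to the leaf of the pulled-back foliation through (z0,w0):
  the curve t \<mapsto> (z0 + t theta, w t) stays in tilde U and is tangent to
  lam d/dz + (1 + R o E) d/dw, i.e. w' = theta/lam (1 + R(e^z, e^w)).\<close>
definition is_lift ::
  "complex \<Rightarrow> (complex \<Rightarrow> complex \<Rightarrow> complex) \<Rightarrow> real \<Rightarrow> real \<Rightarrow>
   complex \<Rightarrow> complex \<Rightarrow> complex \<Rightarrow> real set \<Rightarrow> (real \<Rightarrow> complex) \<Rightarrow> bool" where
  "is_lift lam R \<rho> r z0 w0 \<theta> I w \<longleftrightarrow>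
     0 \<in> I \<and> w 0 = w0 \<and>
     (\<forall>t\<in>I. (z0 + of_real t * \<theta>, w t) \<in> Utilde \<rho> r \<and>
        (w has_vector_derivative
           (\<theta> / lam * (1 + R (exp (z0 + of_real t * \<theta>)) (exp (w t))))) (at t within I))"

definition stability_beam ::
  "complex \<Rightarrow> (complex \<Rightarrow> complex \<Rightarrow> complex) \<Rightarrow> real \<Rightarrow> real \<Rightarrow>
   complex \<Rightarrow> complex \<Rightarrow> complex \<Rightarrow> real \<Rightarrow> bool" where
  "stability_beam lam R \<rho> r z0 w0 vt \<delta> \<longleftrightarrow>
     (\<forall>\<theta>. cmod \<theta> = 1 \<and> \<bar>Arg (\<theta> / vt)\<bar> < \<delta> \<longrightarrow>
        (let I = {t::real. 0 \<le> t \<and> Re (z0 + of_real t * \<theta>) < ln \<rho>} in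
          (\<exists>w. is_lift lam R \<rho> r z0 w0 \<theta> I w) \<and>
          (\<forall>J w. is_interval J \<and> J \<subseteq> I \<and> is_lift lam R \<rho> r z0 w0 \<theta> J w \<longrightarrow>
             (\<forall>s\<in>J. \<forall>t\<in>J. s < t \<longrightarrow> Re (w t) < Re (w s)))))"

end

theory Submission
  imports Defs "HOL-Complex_Analysis.Great_Picard"
begin

text \<open>
  Along the ray \<open>z = z0 + t \<theta>\<close> a lift solves \<open>w' = \<theta> / \<lambda> * (1 + R (exp z) (exp w))\<close>,
  and \<open>|R (exp z) (exp w)| \<le> \<parallel>R\<parallel> exp (a Re z) \<le> \<parallel>R\<parallel> \<rho>^a =: \<kappa>\<close>.
  Writing \<open>\<theta> / \<lambda> = - u / |\<lambda>|\<close> with \<open>|u| = 1\<close>, every direction of the beam has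
  \<open>Re u > cos \<delta> > \<kappa>\<close>, hence \<open>Re w' < 0\<close>: \<open>Re w\<close> decreases strictly, the half-plane
  \<open>Re w < ln r\<close> is never left, and a solution exists as long as the ray stays in \<open>Re z < ln \<rho>\<close>.
  Existence is Peano's theorem via Euler polygons of the field truncated to zero outside the
  domain: as the field points into the half-plane, the polygons and their limit stay where
  the truncation is invisible. The estimates of (ii) integrate
  \<open>|w' - \<theta> / \<lambda>| \<le> \<parallel>R\<parallel> exp (a Re z0) exp (a t Re \<theta>) / |\<lambda>|\<close>.
\<close>

section \<open>Peano's theorem by Euler polygons\<close>

definition euler_weight :: "real \<Rightarrow> nat \<Rightarrow> real \<Rightarrow> real" where
  "euler_weight h k t = min h (max 0 (t - real k * h))"

lemma euler_weight_nonneg: "0 \<le> h \<Longrightarrow> 0 \<le> euler_weight h k t"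
  by (simp add: euler_weight_def)

lemma euler_weight_mono: "s \<le> t \<Longrightarrow> euler_weight h k s \<le> euler_weight h k t"
  by (simp add: euler_weight_def)

lemma euler_weight_diff_eq_0:
  "\<lbrakk>s \<le> t; 0 \<le> h; \<not> (real k * h < t \<and> s < real k * h + h)\<rbrakk>
   \<Longrightarrow> euler_weight h k t - euler_weight h k s = 0"
  by (auto simp: euler_weight_def)

lemma sum_euler_weight:
  "0 \<le> h \<Longrightarrow> 0 \<le> t \<Longrightarrow> (\<Sum>k<N. euler_weight h k t) = min t (real N * h)"
proof (induction N)
  case (Suc N)
  then show ?case by (simp add: euler_weight_def algebra_simps)
qed simp

lemma euler_weight_node:
  assumes "0 < h"
  shows "euler_weight h j (real k * h) = (if j < k then h else 0)"
proof (cases "j < k")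
  case True
  then have "real j + 1 \<le> real k" by simp
  then have "(real j + 1) * h \<le> real k * h" using assms by (simp add: mult_right_mono)
  then show ?thesis using True assms by (simp add: euler_weight_def algebra_simps)
next
  case False
  then show ?thesis using assms by (simp add: euler_weight_def mult_right_mono)
qed

fun euler_nodes :: "(real \<Rightarrow> 'a \<Rightarrow> 'a) \<Rightarrow> real \<Rightarrow> 'a \<Rightarrow> nat \<Rightarrow> 'a::real_vector" where
  "euler_nodes G h w0 0 = w0"
| "euler_nodes G h w0 (Suc k) = euler_nodes G h w0 k + h *\<^sub>R G (real k * h) (euler_nodes G h w0 k)"

definition euler_polygon ::
  "(real \<Rightarrow> 'a \<Rightarrow> 'a) \<Rightarrow> real \<Rightarrow> 'a \<Rightarrow> nat \<Rightarrow> real \<Rightarrow> 'a::real_vector" where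
  "euler_polygon G h w0 N t =
     w0 + (\<Sum>k<N. euler_weight h k t *\<^sub>R G (real k * h) (euler_nodes G h w0 k))"

definition euler_approx :: "(real \<Rightarrow> 'a \<Rightarrow> 'a) \<Rightarrow> real \<Rightarrow> 'a \<Rightarrow> real \<Rightarrow> 'a::real_vector" where
  "euler_approx G h w0 t = euler_polygon G h w0 (nat \<lceil>t / h\<rceil>) t"

lemma euler_nodes_eq_sum:
  "euler_nodes G h w0 k = w0 + (\<Sum>j<k. h *\<^sub>R G (real j * h) (euler_nodes G h w0 j))"
  by (induction k) auto

lemma euler_polygon_node:
  assumes "0 < h" "k \<le> N"
  shows "euler_polygon G h w0 N (real k * h) = euler_nodes G h w0 k"
proof -
  let ?step = "\<lambda>j. h *\<^sub>R G (real j * h) (euler_nodes G h w0 j)"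
  have "euler_polygon G h w0 N (real k * h) = w0 + (\<Sum>j<N. if j < k then ?step j else 0)"
    unfolding euler_polygon_def using assms(1)
    by (intro arg_cong2[where f="(+)"] sum.cong) (auto simp: euler_weight_node)
  also have "(\<Sum>j<N. if j < k then ?step j else 0) = (\<Sum>j<k. if j < k then ?step j else 0)"
    using assms(2) by (intro sum.mono_neutral_right) auto
  finally show ?thesis by (simp add: euler_nodes_eq_sum[of G h w0 k])
qed

lemma euler_polygon_extend:
  assumes "0 < h" "0 \<le> t" "t \<le> real N * h"
  shows "euler_polygon G h w0 (N + j) t = euler_polygon G h w0 N t"
proof (induction j)
  case (Suc j)
  have "real N * h \<le> real (N + j) * h" using assms(1) by (intro mult_right_mono) auto
  then have "t - real (N + j) * h \<le> 0" using assms(3) by linarith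
  then have "euler_weight h (N + j) t = 0" unfolding euler_weight_def using assms(1) by linarith
  then show ?case using Suc by (simp add: euler_polygon_def)
qed simp

lemma le_nat_ceiling_divide_mult:
  assumes "0 < h"
  shows "T \<le> real (nat \<lceil>T / h\<rceil>) * h"
proof -
  have "T / h \<le> real (nat \<lceil>T / h\<rceil>)" by linarith
  then show ?thesis using assms by (simp add: divide_le_eq)
qed

lemma euler_approx_eq_polygon:
  assumes h: "0 < h" and t: "0 \<le> t" "t \<le> real N * h"
  shows "euler_approx G h w0 t = euler_polygon G h w0 N t"
proof -
  define N0 where "N0 = nat \<lceil>t / h\<rceil>"
  have "t / h \<le> real N" using t h by (simp add: divide_le_eq)
  then have "N0 \<le> N" unfolding N0_def by linarith
  moreover have "t \<le> real N0 * h" unfolding N0_def by (rule le_nat_ceiling_divide_mult[OF h])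
  ultimately show ?thesis
    using euler_polygon_extend[OF h t(1), of N0 G w0 "N - N0"] by (simp add: euler_approx_def N0_def)
qed

lemma euler_polygon_increment_bound:
  fixes G :: "real \<Rightarrow> 'a \<Rightarrow> 'a::real_normed_vector"
  assumes h: "0 < h" and ab: "0 \<le> a" "a \<le> b" "b \<le> real N * h"
    and B: "\<And>k. k < N \<Longrightarrow> real k * h < b \<Longrightarrow> a < real k * h + h \<Longrightarrow>
               norm (G (real k * h) (euler_nodes G h w0 k) - V) \<le> B"
  shows "norm (euler_polygon G h w0 N b - euler_polygon G h w0 N a - (b - a) *\<^sub>R V) \<le> (b - a) * B"
proof -
  let ?c = "\<lambda>k. euler_weight h k b - euler_weight h k a"
  let ?g = "\<lambda>k. G (real k * h) (euler_nodes G h w0 k)"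
  have sum_c: "(\<Sum>k<N. ?c k) = b - a"
    using ab h by (simp add: sum_subtractf sum_euler_weight)
  have "euler_polygon G h w0 N b - euler_polygon G h w0 N a - (b - a) *\<^sub>R V
      = (\<Sum>k<N. ?c k *\<^sub>R (?g k - V))"
    unfolding euler_polygon_def sum_c[symmetric]
    by (simp add: scaleR_diff_left scaleR_diff_right sum_subtractf scaleR_sum_left)
  also have "norm \<dots> \<le> (\<Sum>k<N. ?c k * B)"
  proof (intro order_trans[OF norm_sum] sum_mono)
    fix k assume k: "k \<in> {..<N}"
    have c_nonneg: "0 \<le> ?c k" using euler_weight_mono[OF ab(2)] by simp
    show "norm (?c k *\<^sub>R (?g k - V)) \<le> ?c k * B"
    proof (cases "real k * h < b \<and> a < real k * h + h")
      case True
      then show ?thesis using B[of k] k c_nonneg by (simp add: mult_left_mono)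
    next
      case False
      then show ?thesis using euler_weight_diff_eq_0[OF ab(2) _ False] h by simp
    qed
  qed
  also have "\<dots> = (b - a) * B" by (simp add: sum_distrib_right[symmetric] sum_c)
  finally show ?thesis .
qed

lemma euler_polygon_lipschitz:
  fixes G :: "real \<Rightarrow> 'a \<Rightarrow> 'a::real_normed_vector"
  assumes h: "0 < h" and st: "0 \<le> s" "0 \<le> t" "s \<le> real N * h" "t \<le> real N * h"
    and M: "\<And>x v. norm (G x v) \<le> M"
  shows "norm (euler_polygon G h w0 N s - euler_polygon G h w0 N t) \<le> M * \<bar>s - t\<bar>"
proof -
  have *: "norm (euler_polygon G h w0 N b - euler_polygon G h w0 N a) \<le> M * (b - a)"
    if "0 \<le> a" "a \<le> b" "b \<le> real N * h" for a b
    using euler_polygon_increment_bound[OF h that, of G w0 0 M] M by (simp add: mult.commute)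
  show ?thesis
    using *[of s t] *[of t s] st by (cases "s \<le> t") (auto simp: norm_minus_commute)
qed

lemma euler_approx_lipschitz:
  fixes G :: "real \<Rightarrow> 'a \<Rightarrow> 'a::real_normed_vector"
  assumes "0 < h" "0 \<le> s" "0 \<le> t" and M: "\<And>x v. norm (G x v) \<le> M"
  shows "norm (euler_approx G h w0 s - euler_approx G h w0 t) \<le> M * \<bar>s - t\<bar>"
proof -
  let ?N = "nat \<lceil>max s t / h\<rceil>"
  have N: "max s t \<le> real ?N * h" by (rule le_nat_ceiling_divide_mult[OF assms(1)])
  have "norm (euler_polygon G h w0 ?N s - euler_polygon G h w0 ?N t) \<le> M * \<bar>s - t\<bar>"
    using N by (intro euler_polygon_lipschitz[OF assms(1-3) _ _ M]) auto
  moreover have "euler_approx G h w0 x = euler_polygon G h w0 ?N x" if "x \<in> {s, t}" for x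
    using N that assms(2,3) by (intro euler_approx_eq_polygon[OF assms(1)]) auto
  ultimately show ?thesis by simp
qed

lemma Re_euler_polygon_le:
  assumes h: "0 < h" and Re_le: "\<And>s v. Re (G s v) \<le> 0"
  shows "Re (euler_polygon G h w0 N t) \<le> Re w0"
proof -
  have "Re (\<Sum>k<N. euler_weight h k t *\<^sub>R G (real k * h) (euler_nodes G h w0 k)) \<le> 0"
    unfolding Re_sum using h Re_le
    by (intro sum_nonpos) (simp add: mult_nonneg_nonpos euler_weight_nonneg)
  then show ?thesis by (simp add: euler_polygon_def)
qed

lemma equilipschitz_imp_pointwise_convergent_subseq:
  fixes f :: "nat \<Rightarrow> real \<Rightarrow> 'a::{real_normed_vector,heine_borel}"
  assumes f0: "\<And>n. f n 0 = c"
    and lip: "\<And>n s t. 0 \<le> s \<Longrightarrow> 0 \<le> t \<Longrightarrow> norm (f n s - f n t) \<le> M * \<bar>s - t\<bar>"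
  obtains \<sigma> w where "strict_mono \<sigma>" "\<And>t. 0 \<le> t \<Longrightarrow> (\<lambda>n. f (\<sigma> n) t) \<longlonglongrightarrow> w t"
proof -
  have M: "0 \<le> M" using lip[of 1 0 0] by (simp add: order_trans[OF norm_ge_zero])
  define S where "S = \<rat> \<inter> {0::real..}"
  have "countable S" unfolding S_def using countable_rat by blast
  \<comment> \<open>Rescaling by \<open>1 + x\<close> makes the family bounded on the unbounded set \<open>S\<close>.\<close>
  moreover have "norm ((f n x - c) /\<^sub>R (1 + x)) \<le> M" if "x \<in> S" for n x
  proof -
    have x: "0 \<le> x" using that by (simp add: S_def)
    have "norm (f n x - c) \<le> M * (1 + x)"
      using lip[OF x order_refl, of n] f0[of n] M x by (simp add: algebra_simps)
    moreover have "norm ((f n x - c) /\<^sub>R (1 + x)) = norm (f n x - c) / (1 + x)"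
      using x by (simp add: divide_inverse_commute)
    ultimately show ?thesis using x by (simp add: pos_divide_le_eq)
  qed
  ultimately obtain \<sigma> where \<sigma>: "strict_mono \<sigma>"
    and conv_S: "\<And>x. x \<in> S \<Longrightarrow> \<exists>l. (\<lambda>n. (f (\<sigma> n) x - c) /\<^sub>R (1 + x)) \<longlonglongrightarrow> l"
    by (rule function_convergent_subsequence[where f = "\<lambda>n x. (f n x - c) /\<^sub>R (1 + x)"]) metis+
  have Cauchy_S: "Cauchy (\<lambda>n. f (\<sigma> n) q)" if q: "q \<in> S" for q
  proof -
    obtain l where "(\<lambda>n. (f (\<sigma> n) q - c) /\<^sub>R (1 + q)) \<longlonglongrightarrow> l" using conv_S[OF q] by blast
    then have "(\<lambda>n. c + (1 + q) *\<^sub>R ((f (\<sigma> n) q - c) /\<^sub>R (1 + q))) \<longlonglongrightarrow> c + (1 + q) *\<^sub>R l"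
      by (intro tendsto_intros)
    moreover have "1 + q \<noteq> 0" using q by (simp add: S_def)
    ultimately show ?thesis by (auto intro: LIMSEQ_imp_Cauchy)
  qed
  have "Cauchy (\<lambda>n. f (\<sigma> n) t)" if t: "0 \<le> t" for t
  proof (rule metric_CauchyI)
    fix e :: real assume e: "0 < e"
    obtain q where q: "q \<in> \<rat>" "t < q" "q < t + e / (3 * (M + 1))"
      using Rats_dense_in_real[of t "t + e / (3 * (M + 1))"] e M by auto
    have qS: "q \<in> S" using q t by (simp add: S_def)
    have "M * \<bar>q - t\<bar> \<le> M * (e / (3 * (M + 1)))"
      using q M by (intro mult_left_mono) auto
    also have "\<dots> < (M + 1) * (e / (3 * (M + 1)))"
      using e M by (intro mult_strict_right_mono) auto
    also have "\<dots> = e / 3" using M by (simp add: field_simps)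
    finally have close: "norm (f n q - f n t) < e / 3" for n
      using lip[of q t n] qS t M e by (simp add: S_def)
    obtain N where N: "\<And>m n. N \<le> m \<Longrightarrow> N \<le> n \<Longrightarrow> dist (f (\<sigma> m) q) (f (\<sigma> n) q) < e / 3"
      using metric_CauchyD[OF Cauchy_S[OF qS], of "e / 3"] e by auto
    show "\<exists>N. \<forall>m\<ge>N. \<forall>n\<ge>N. dist (f (\<sigma> m) t) (f (\<sigma> n) t) < e"
    proof (intro exI allI impI)
      fix m n assume "N \<le> m" "N \<le> n"
      have "dist (f (\<sigma> m) t) (f (\<sigma> n) t)
          \<le> dist (f (\<sigma> m) t) (f (\<sigma> m) q) + dist (f (\<sigma> m) q) (f (\<sigma> n) q)
             + dist (f (\<sigma> n) q) (f (\<sigma> n) t)"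
        by (meson dist_triangle order_trans add_mono order_refl)
      then show "dist (f (\<sigma> m) t) (f (\<sigma> n) t) < e"
        using N[OF \<open>N \<le> m\<close> \<open>N \<le> n\<close>] close[of "\<sigma> m"] close[of "\<sigma> n"]
        by (simp add: dist_norm norm_minus_commute)
    qed
  qed
  then show ?thesis
    using that[OF \<sigma>, of "\<lambda>t. lim (\<lambda>n. f (\<sigma> n) t)"] by (simp add: Cauchy_convergent_iff convergent_LIMSEQ_iff)
qed

lemma euler_approx_increment_near:
  fixes G :: "real \<Rightarrow> 'a \<Rightarrow> 'a::real_normed_vector"
  assumes h: "0 < h" and M: "\<And>s v. norm (G s v) \<le> M"
    and ab: "0 \<le> a" "a \<le> t1" "t1 \<le> b" "b - a + h \<le> d"
    and near: "\<And>s v. 0 \<le> s \<Longrightarrow> \<bar>s - t1\<bar> \<le> d \<Longrightarrow>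
                 norm (v - w1) \<le> M * d + norm (euler_approx G h w0 t1 - w1) \<Longrightarrow>
                 norm (G s v - V) \<le> e"
  shows "norm (euler_approx G h w0 b - euler_approx G h w0 a - (b - a) *\<^sub>R V) \<le> (b - a) * e"
proof -
  define N where "N = nat \<lceil>b / h\<rceil>"
  let ?P = "euler_polygon G h w0 N"
  have N: "b \<le> real N * h" unfolding N_def by (rule le_nat_ceiling_divide_mult[OF h])
  have approx: "euler_approx G h w0 x = ?P x" if "0 \<le> x" "x \<le> b" for x
    using that N by (intro euler_approx_eq_polygon[OF h]) auto
  have M0: "0 \<le> M" using M[of 0 0] by (simp add: order_trans[OF norm_ge_zero])
  have "norm (?P b - ?P a - (b - a) *\<^sub>R V) \<le> (b - a) * e"
  proof (rule euler_polygon_increment_bound[OF h ab(1) _ N])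
    show "a \<le> b" using ab by simp
    fix k assume k: "k < N" "real k * h < b" "a < real k * h + h"
    have kh: "0 \<le> real k * h" "\<bar>real k * h - t1\<bar> \<le> d" "real k * h \<le> real N * h"
      using k ab h by auto
    have "norm (euler_nodes G h w0 k - w1) \<le> norm (?P (real k * h) - ?P t1) + norm (?P t1 - w1)"
      using euler_polygon_node[OF h, of k N G w0] k(1) norm_triangle_ineq[of "?P (real k * h) - ?P t1" "?P t1 - w1"]
      by simp
    also have "\<dots> \<le> M * d + norm (euler_approx G h w0 t1 - w1)"
    proof -
      have "norm (?P (real k * h) - ?P t1) \<le> M * \<bar>real k * h - t1\<bar>"
        using kh ab N by (intro euler_polygon_lipschitz[OF h _ _ _ _ M]) auto
      also have "\<dots> \<le> M * d" using kh(2) M0 by (rule mult_left_mono)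
      finally show ?thesis using approx[of t1] ab by simp
    qed
    finally show "norm (G (real k * h) (euler_nodes G h w0 k) - V) \<le> e"
      using near kh by blast
  qed
  then show ?thesis using approx ab by simp
qed

lemma euler_limit_increment_le:
  fixes G :: "real \<Rightarrow> 'a \<Rightarrow> 'a::real_normed_vector"
  assumes M: "\<And>s v. norm (G s v) \<le> M"
    and h: "\<And>n. 0 < h n" "h \<longlonglongrightarrow> 0"
    and lim: "\<And>t. 0 \<le> t \<Longrightarrow> (\<lambda>n. euler_approx G (h n) w0 t) \<longlonglongrightarrow> w t"
    and ty: "0 \<le> t1" "0 \<le> y" "\<bar>y - t1\<bar> < d / 2" and \<epsilon>: "0 < \<epsilon>"
    and near: "\<And>s v. 0 \<le> s \<Longrightarrow> \<bar>s - t1\<bar> \<le> d \<Longrightarrow> norm (v - w t1) < M * d + \<epsilon> \<Longrightarrow>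
                 norm (G s v - V) \<le> e"
  shows "norm (w y - w t1 - (y - t1) *\<^sub>R V) \<le> e * \<bar>y - t1\<bar>"
proof -
  define a where "a = min y t1"
  define b where "b = max y t1"
  let ?f = "\<lambda>n. euler_approx G (h n) w0"
  have ab: "0 \<le> a" "a \<le> t1" "t1 \<le> b" "b - a < d / 2"
    using ty by (auto simp: a_def b_def min_def max_def abs_if split: if_splits)
  have "eventually (\<lambda>n. h n < d / 2) sequentially"
    using tendstoD[OF h(2), of "d / 2"] ab h(1) by (auto elim!: eventually_mono)
  moreover have "eventually (\<lambda>n. dist (?f n t1) (w t1) < \<epsilon>) sequentially"
    using tendstoD[OF lim[OF ty(1)] \<epsilon>] .
  ultimately have "eventually (\<lambda>n. norm (?f n b - ?f n a - (b - a) *\<^sub>R V) \<le> (b - a) * e) sequentially"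
  proof eventually_elim
    case (elim n)
    show ?case
    proof (rule euler_approx_increment_near[OF h(1) M ab(1-3)])
      show "b - a + h n \<le> d" using ab elim(1) by simp
      fix s v assume "0 \<le> s" "\<bar>s - t1\<bar> \<le> d" "norm (v - w t1) \<le> M * d + norm (?f n t1 - w t1)"
      then show "norm (G s v - V) \<le> e" using near elim(2) by (simp add: dist_norm)
    qed
  qed
  moreover have "(\<lambda>n. norm (?f n b - ?f n a - (b - a) *\<^sub>R V)) \<longlonglongrightarrow> norm (w b - w a - (b - a) *\<^sub>R V)"
    using ab ty by (intro tendsto_intros lim) auto
  ultimately have "norm (w b - w a - (b - a) *\<^sub>R V) \<le> (b - a) * e"
    by (intro tendsto_le[OF trivial_limit_sequentially tendsto_const])
  moreover have "norm (w b - w a - (b - a) *\<^sub>R V) = norm (w y - w t1 - (y - t1) *\<^sub>R V)"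
    "b - a = \<bar>y - t1\<bar>"
    unfolding a_def b_def by (auto simp: min_def max_def norm_minus_commute algebra_simps)
  ultimately show ?thesis by (simp add: mult.commute)
qed

lemma euler_limit_has_vector_derivative:
  fixes G :: "real \<Rightarrow> 'a \<Rightarrow> 'a::real_normed_vector"
  assumes M: "\<And>s v. norm (G s v) \<le> M"
    and h: "\<And>n. 0 < h n" "h \<longlonglongrightarrow> 0"
    and lim: "\<And>t. 0 \<le> t \<Longrightarrow> (\<lambda>n. euler_approx G (h n) w0 t) \<longlonglongrightarrow> w t"
    and t1: "0 \<le> t1"
    and cont: "continuous (at (t1, w t1) within {0..} \<times> UNIV) (\<lambda>p. G (fst p) (snd p))"
  shows "(w has_vector_derivative G t1 (w t1)) (at t1 within {0..})"
  unfolding has_vector_derivative_def has_derivative_within_alt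
proof (intro conjI allI impI bounded_linear_scaleR_left)
  fix e :: real assume e: "0 < e"
  obtain \<eta> where \<eta>: "0 < \<eta>"
    and G_close: "\<And>p. p \<in> {0..} \<times> UNIV \<Longrightarrow> dist p (t1, w t1) < \<eta> \<Longrightarrow>
                    dist (G (fst p) (snd p)) (G t1 (w t1)) < e"
    using cont e unfolding continuous_within_eps_delta by fastforce
  have M0: "0 \<le> M" using M[of 0 0] by (simp add: order_trans[OF norm_ge_zero])
  define d where "d = \<eta> / (4 * (M + 1))"
  have d: "0 < d" "d \<le> \<eta> / 4" "M * d \<le> \<eta> / 4"
    using \<eta> M0 by (auto simp: d_def field_simps)
  have near: "norm (G s v - G t1 (w t1)) \<le> e"
    if "0 \<le> s" "\<bar>s - t1\<bar> \<le> d" "norm (v - w t1) < M * d + \<eta> / 4" for s v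
  proof -
    have "dist (s, v) (t1, w t1) \<le> \<bar>s - t1\<bar> + norm (v - w t1)"
      using norm_Pair_le[of "s - t1" "v - w t1"] by (simp add: dist_norm)
    also have "\<dots> < \<eta>" using that d by simp
    finally show ?thesis using G_close[of "(s, v)"] that(1) by (simp add: dist_norm)
  qed
  show "\<exists>\<delta>>0. \<forall>y\<in>{0..}. norm (y - t1) < \<delta> \<longrightarrow>
          norm (w y - w t1 - (y - t1) *\<^sub>R G t1 (w t1)) \<le> e * norm (y - t1)"
    using euler_limit_increment_le[OF M h lim t1 _ _ _ near] \<eta> d by (intro exI[of _ "d / 2"]) auto
qed

lemma continuous_within_transform_openin:
  assumes "isCont g p" "openin (top_of_set T) U" "p \<in> U" "\<And>x. x \<in> U \<Longrightarrow> f x = g x"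
  shows "continuous (at p within T) f"
  unfolding continuous_within
proof (rule Lim_transform_within_openin[OF _ assms(2,3)])
  show "(g \<longlongrightarrow> f p) (at p within T)"
    using continuous_at_imp_continuous_at_within[OF assms(1)] assms(3,4) by (simp add: continuous_within)
qed (use assms(4) in auto)

lemma ode_solution_in_half_plane_exists:
  fixes G :: "real \<Rightarrow> complex \<Rightarrow> complex" and I :: "real set"
  assumes I: "openin (top_of_set {0..}) I"
    and w0: "Re w0 < L"
    and bound: "\<And>s v. s \<in> I \<Longrightarrow> Re v < L \<Longrightarrow> norm (G s v) \<le> M"
    and Re_le: "\<And>s v. s \<in> I \<Longrightarrow> Re v < L \<Longrightarrow> Re (G s v) \<le> 0"
    and cont: "\<And>s v. s \<in> I \<Longrightarrow> Re v < L \<Longrightarrow> isCont (\<lambda>p. G (fst p) (snd p)) (s, v)"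
  obtains w where "w 0 = w0" "\<And>t. t \<in> I \<Longrightarrow> Re (w t) \<le> Re w0"
    "\<And>t. t \<in> I \<Longrightarrow> (w has_vector_derivative G t (w t)) (at t within I)"
proof -
  \<comment> \<open>Since \<open>Re G \<le> 0\<close>, the Euler polygons of the truncated field never leave the half-plane.\<close>
  define G' where "G' s v = (if s \<in> I \<and> Re v < L then G s v else 0)" for s v
  define h where "h n = inverse (real (Suc n))" for n
  define f where "f n = euler_approx G' (h n) w0" for n
  have h: "0 < h n" for n by (simp add: h_def)
  have G'_bound: "norm (G' s v) \<le> max M 0" for s v
    using bound by (auto simp: G'_def le_max_iff_disj)
  have f0: "f n 0 = w0" for n
  proof -
    have "f n 0 = euler_polygon G' (h n) w0 0 0" unfolding f_def by (rule euler_approx_eq_polygon[OF h]) auto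
    then show ?thesis by (simp add: euler_polygon_def)
  qed
  have "norm (f n s - f n t) \<le> max M 0 * \<bar>s - t\<bar>" if "0 \<le> s" "0 \<le> t" for n s t
    unfolding f_def using that by (rule euler_approx_lipschitz[OF h _ _ G'_bound])
  then obtain \<sigma> w where \<sigma>: "strict_mono \<sigma>" and lim: "\<And>t. 0 \<le> t \<Longrightarrow> (\<lambda>n. f (\<sigma> n) t) \<longlonglongrightarrow> w t"
    using equilipschitz_imp_pointwise_convergent_subseq[of f w0, OF f0] by blast
  have w_0: "w 0 = w0" using lim[of 0] by (simp add: f0 LIMSEQ_const_iff)
  have Re_w: "Re (w t) \<le> Re w0" if "0 \<le> t" for t
  proof (rule LIMSEQ_le_const2[OF tendsto_Re[OF lim[OF that]]])
    show "\<exists>N. \<forall>n\<ge>N. Re (f (\<sigma> n) t) \<le> Re w0"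
      using Re_euler_polygon_le[OF h, of G'] Re_le by (auto simp: f_def euler_approx_def G'_def)
  qed
  have I0: "I \<subseteq> {0..}" using openin_imp_subset[OF I] .
  have "(w has_vector_derivative G t1 (w t1)) (at t1 within I)" if t1: "t1 \<in> I" for t1
  proof -
    have w_L: "Re (w t1) < L" using Re_w[of t1] t1 I0 w0 by auto
    have U: "openin (top_of_set ({0..} \<times> UNIV)) (I \<times> {v. Re v < L})"
      using I open_halfspace_Re_lt by (intro openin_Times) auto
    have "continuous (at (t1, w t1) within {0..} \<times> UNIV) (\<lambda>p. G' (fst p) (snd p))"
      using t1 w_L by (intro continuous_within_transform_openin[OF cont[OF t1 w_L] U])
        (auto simp: G'_def)
    moreover have "(\<lambda>n. h (\<sigma> n)) \<longlonglongrightarrow> 0"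
      using LIMSEQ_subseq_LIMSEQ[OF LIMSEQ_inverse_real_of_nat \<sigma>] by (simp add: h_def o_def)
    ultimately have "(w has_vector_derivative G' t1 (w t1)) (at t1 within {0..})"
      using t1 I0 lim unfolding f_def by (intro euler_limit_has_vector_derivative[OF G'_bound h]) auto
    then show ?thesis
      using t1 w_L by (auto simp: G'_def intro: has_vector_derivative_within_subset[OF _ I0])
  qed
  then show ?thesis using that w_0 Re_w I0 by blast
qed


lemma has_vector_derivative_on_interval_between:
  fixes g :: "real \<Rightarrow> 'a::real_normed_vector"
  assumes J: "is_interval J" "s \<in> J" "t \<in> J"
    and deriv: "\<And>x. x \<in> J \<Longrightarrow> (g has_vector_derivative g' x) (at x within J)"
  shows "continuous_on {s..t} g"
    and "\<And>x. s < x \<Longrightarrow> x < t \<Longrightarrow> (g has_vector_derivative g' x) (at x)"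
proof -
  have sub: "{s..t} \<subseteq> J"
    using interval_subset_is_interval[OF J(1), of s t] J by (simp add: cbox_interval)
  show "continuous_on {s..t} g"
    unfolding continuous_on_eq_continuous_within
  proof
    fix x assume "x \<in> {s..t}"
    then show "continuous (at x within {s..t}) g"
      using sub by (intro continuous_within_subset[OF has_vector_derivative_continuous[OF deriv]]) auto
  qed
  fix x assume x: "s < x" "x < t"
  have "{s<..<t} \<subseteq> interior J"
    by (rule interior_maximal) (use sub in auto)
  then have x_J: "x \<in> interior J" using x by auto
  then have "at x within J = at x" by (rule at_within_interior)
  then show "(g has_vector_derivative g' x) (at x)"
    using deriv[of x] x_J interior_subset by auto
qed

lemma norm_diff_le_on_interval_if_derivative_bound:
  fixes g :: "real \<Rightarrow> 'a::real_normed_vector"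
  assumes J: "is_interval J" "s \<in> J" "t \<in> J" "s \<le> t"
    and deriv: "\<And>x. x \<in> J \<Longrightarrow> (g has_vector_derivative g' x) (at x within J)"
    and \<phi>': "\<And>x. (\<phi> has_real_derivative \<phi>' x) (at x)"
    and bound: "\<And>x. x \<in> J \<Longrightarrow> norm (g' x) \<le> \<phi>' x"
  shows "norm (g t - g s) \<le> \<phi> t - \<phi> s"
proof (cases "s = t")
  case False
  have sub: "{s..t} \<subseteq> J"
    using interval_subset_is_interval[OF J(1), of s t] J by (simp add: cbox_interval)
  have cont: "continuous_on {s..t} g"
    by (rule has_vector_derivative_on_interval_between(1)[OF J(1-3)]) (rule deriv)
  have at: "(g has_vector_derivative g' x) (at x)" if "s < x" "x < t" for x
    by (rule has_vector_derivative_on_interval_between(2)[OF J(1-3) _ that]) (rule deriv)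
  show ?thesis
  proof (rule differentiable_bound_general[of s t g \<phi> g' \<phi>'])
    show "s < t" using J(4) False by simp
    show "continuous_on {s..t} \<phi>"
      using \<phi>' by (meson DERIV_isCont continuous_at_imp_continuous_on)
    fix x assume x: "s < x" "x < t"
    then have "x \<in> J" using sub by auto
    then show "norm (g' x) \<le> \<phi>' x" by (rule bound)
    show "(\<phi> has_vector_derivative \<phi>' x) (at x)"
      using \<phi>' by (simp add: has_real_derivative_iff_has_vector_derivative)
  qed (use cont at in auto)
qed simp

lemma Re_strict_antimono_on_interval_if_derivative_neg:
  fixes g :: "real \<Rightarrow> complex"
  assumes J: "is_interval J" "s \<in> J" "t \<in> J" "s < t"
    and deriv: "\<And>x. x \<in> J \<Longrightarrow> (g has_vector_derivative g' x) (at x within J)"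
    and neg: "\<And>x. x \<in> J \<Longrightarrow> Re (g' x) < 0"
  shows "Re (g t) < Re (g s)"
proof (rule DERIV_neg_imp_decreasing_open[OF J(4)])
  have "continuous_on {s..t} g"
    by (rule has_vector_derivative_on_interval_between(1)[OF J(1-3)]) (rule deriv)
  then show "continuous_on {s..t} (\<lambda>x. Re (g x))" by (intro continuous_intros)
  fix x assume x: "s < x" "x < t"
  have "x \<in> J"
    using interval_subset_is_interval[OF J(1), of s t] J x by (auto simp: cbox_interval)
  moreover have "(g has_vector_derivative g' x) (at x)"
    by (rule has_vector_derivative_on_interval_between(2)[OF J(1-3) _ x]) (rule deriv)
  ultimately show "\<exists>y. ((\<lambda>x. Re (g x)) has_real_derivative y) (at x) \<and> y < 0"
    using has_field_derivative_Re neg by blast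
qed

section \<open>The pulled-back foliation\<close>

lemma norm_R_le_normR:
  assumes set: "standing_setting lam a R \<rho> r" and xy: "(x, y) \<in> polydisc \<rho> r" and x0: "x \<noteq> 0"
  shows "cmod (R x y) \<le> normR a R \<rho> r * cmod x ^ a"
proof -
  have bdd: "bdd_above ((\<lambda>(x, y). cmod (R x y / x ^ a)) ` {(x, y)\<in>polydisc \<rho> r. x \<noteq> 0})"
    using set by (simp add: standing_setting_def)
  have "cmod (R x y / x ^ a) \<le> normR a R \<rho> r"
    unfolding normR_def using cSUP_upper[OF _ bdd, of "(x, y)"] xy x0 by simp
  then show ?thesis using x0 by (simp add: norm_divide norm_power divide_le_eq)
qed

lemma normR_nonneg:
  assumes set: "standing_setting lam a R \<rho> r"
  shows "0 \<le> normR a R \<rho> r"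
proof -
  have pos: "0 < \<rho>" "0 < r" using set by (auto simp: standing_setting_def)
  then have "(of_real (\<rho> / 2), 0) \<in> polydisc \<rho> r" by (simp add: polydisc_def)
  from norm_R_le_normR[OF set this] have "0 \<le> normR a R \<rho> r * (\<rho> / 2) ^ a"
    using pos by (simp add: norm_power order_trans[OF norm_ge_zero])
  moreover have "0 < (\<rho> / 2) ^ a" using pos by simp
  ultimately show ?thesis by (simp add: zero_le_mult_iff)
qed

lemma exp_mem_polydisc:
  assumes "0 < \<rho>" "0 < r" "Re z < ln \<rho>" "Re v < ln r"
  shows "(exp z, exp v) \<in> polydisc \<rho> r"
  using assms by (simp add: polydisc_def ln_less_cancel_iff[symmetric] del: ln_less_cancel_iff)

lemma norm_R_exp_le:
  assumes set: "standing_setting lam a R \<rho> r" and zv: "Re z < ln \<rho>" "Re v < ln r"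
  shows "cmod (R (exp z) (exp v)) \<le> normR a R \<rho> r * exp (real a * Re z)"
  using norm_R_le_normR[OF set exp_mem_polydisc[OF _ _ zv]] set
  by (simp add: standing_setting_def norm_power exp_of_nat_mult)

lemma norm_R_exp_le_radius:
  assumes set: "standing_setting lam a R \<rho> r" and zv: "Re z < ln \<rho>" "Re v < ln r"
  shows "cmod (R (exp z) (exp v)) \<le> normR a R \<rho> r * \<rho> ^ a"
proof -
  have "exp (Re z) < \<rho>" using zv set by (simp add: standing_setting_def ln_less_cancel_iff[symmetric] del: ln_less_cancel_iff)
  then have "exp (real a * Re z) \<le> \<rho> ^ a" by (simp add: exp_of_nat_mult power_mono)
  then show ?thesis
    using norm_R_exp_le[OF set zv] normR_nonneg[OF set] by (meson mult_left_mono order_trans)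
qed

lemma isCont_R:
  assumes set: "standing_setting lam a R \<rho> r" and p: "p \<in> polydisc \<rho> r"
  shows "isCont (\<lambda>q. R (fst q) (snd q)) p"
proof -
  obtain A B where "((\<lambda>q. R (fst q) (snd q)) has_derivative (\<lambda>h. A * fst h + B * snd h)) (at p)"
    using set p unfolding standing_setting_def holomorphic2_def by blast
  then show ?thesis by (rule has_derivative_continuous)
qed

lemma Re_gt_if_abs_Arg_lt_arccos:
  fixes u :: complex
  assumes "cmod u = 1" "\<bar>Arg u\<bar> < arccos \<kappa>" "-1 \<le> \<kappa>" "\<kappa> \<le> 1"
  shows "\<kappa> < Re u"
proof -
  have "u \<noteq> 0" using assms(1) by auto
  then have "cis (Arg u) = u" using assms(1) by (simp add: cis_Arg sgn_div_norm)
  then have "Re u = cos (Arg u)" by (metis cis.sel(1))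
  also have "\<dots> = cos \<bar>Arg u\<bar>" by simp
  also have "\<dots> > cos (arccos \<kappa>)"
    using assms arccos_bounded[of \<kappa>] by (intro cos_monotone_0_pi) auto
  finally show ?thesis using assms by simp
qed

lemma Re_lift_field_neg:
  assumes set: "standing_setting lam a R \<rho> r" and small: "normR a R \<rho> r * \<rho> ^ a < 1"
    and \<theta>: "cmod \<theta> = 1" "\<bar>Arg (\<theta> / (- lam / of_real (cmod lam)))\<bar> < arccos (normR a R \<rho> r * \<rho> ^ a)"
    and zv: "Re z < ln \<rho>" "Re v < ln r"
  shows "Re (\<theta> / lam * (1 + R (exp z) (exp v))) < 0"
proof -
  define \<kappa> where "\<kappa> = normR a R \<rho> r * \<rho> ^ a"
  define u where "u = \<theta> / (- lam / of_real (cmod lam))"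
  define Rv where "Rv = R (exp z) (exp v)"
  have lam: "lam \<noteq> 0" and \<rho>: "0 < \<rho>" using set by (auto simp: standing_setting_def)
  have \<kappa>: "0 \<le> \<kappa>" using normR_nonneg[OF set] \<rho> by (simp add: \<kappa>_def)
  have u: "cmod u = 1" using \<theta>(1) lam by (simp add: u_def norm_divide norm_mult)
  have "\<kappa> < Re u" using \<theta>(2) small \<kappa> u by (intro Re_gt_if_abs_Arg_lt_arccos) (auto simp: u_def \<kappa>_def)
  moreover have "- Re (u * Rv) \<le> cmod Rv" using abs_Re_le_cmod[of "u * Rv"] u by (simp add: norm_mult)
  moreover have "cmod Rv \<le> \<kappa>" using norm_R_exp_le_radius[OF set zv] by (simp add: Rv_def \<kappa>_def)
  moreover have "\<theta> / lam = - u / of_real (cmod lam)"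
    using lam by (simp add: u_def field_simps)
  then have "Re (\<theta> / lam * (1 + Rv)) = - (Re u + Re (u * Rv)) / cmod lam"
    using lam by (simp add: algebra_simps Re_divide_of_real) (simp add: field_simps)
  ultimately show ?thesis using lam by (simp add: Rv_def divide_neg_pos)
qed

lemma norm_lift_field_le:
  assumes set: "standing_setting lam a R \<rho> r" and small: "normR a R \<rho> r * \<rho> ^ a < 1"
    and \<theta>: "cmod \<theta> = 1" and zv: "Re z < ln \<rho>" "Re v < ln r"
  shows "cmod (\<theta> / lam * (1 + R (exp z) (exp v))) \<le> 2 / cmod lam"
proof -
  have "cmod (1 + R (exp z) (exp v)) \<le> 1 + 1"
    using norm_R_exp_le_radius[OF set zv] small norm_triangle_ineq[of 1 "R (exp z) (exp v)"] by simp
  then show ?thesis using \<theta> by (simp add: norm_mult norm_divide divide_right_mono)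
qed

lemma isCont_lift_field:
  assumes set: "standing_setting lam a R \<rho> r"
    and sv: "Re (z0 + of_real s * \<theta>) < ln \<rho>" "Re v < ln r"
  shows "isCont (\<lambda>p. \<theta> / lam * (1 + R (exp (z0 + of_real (fst p) * \<theta>)) (exp (snd p)))) (s, v)"
proof -
  define \<Phi> where "\<Phi> p = (exp (z0 + of_real (fst p) * \<theta>), exp (snd p :: complex))" for p :: "real \<times> complex"
  have "\<Phi> (s, v) \<in> polydisc \<rho> r"
    unfolding \<Phi>_def using set sv by (intro exp_mem_polydisc) (auto simp: standing_setting_def)
  then have "isCont (\<lambda>q. R (fst q) (snd q)) (\<Phi> (s, v))" by (rule isCont_R[OF set])
  moreover have "isCont \<Phi> (s, v)" unfolding \<Phi>_def by (intro continuous_intros)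
  ultimately have "isCont (\<lambda>p. R (fst (\<Phi> p)) (snd (\<Phi> p))) (s, v)"
    using continuous_at_compose[of "(s, v)" \<Phi> "\<lambda>q. R (fst q) (snd q)"] by (simp add: o_def)
  then show ?thesis unfolding \<Phi>_def by (intro continuous_intros) simp
qed

lemma lift_in_beam_exists:
  assumes set: "standing_setting lam a R \<rho> r" and small: "normR a R \<rho> r * \<rho> ^ a < 1"
    and \<theta>: "cmod \<theta> = 1" "\<bar>Arg (\<theta> / (- lam / of_real (cmod lam)))\<bar> < arccos (normR a R \<rho> r * \<rho> ^ a)"
    and p0: "(z0, w0) \<in> Utilde \<rho> r"
  shows "\<exists>w. is_lift lam R \<rho> r z0 w0 \<theta> {t. 0 \<le> t \<and> Re (z0 + of_real t * \<theta>) < ln \<rho>} w"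
proof -
  define I where "I = {t. 0 \<le> t \<and> Re (z0 + of_real t * \<theta>) < ln \<rho>}"
  define G where "G s v = \<theta> / lam * (1 + R (exp (z0 + of_real s * \<theta>)) (exp v))" for s v
  have z0: "Re z0 < ln \<rho>" and w0: "Re w0 < ln r" using p0 by (auto simp: Utilde_def)
  have "open {t. Re (z0 + of_real t * \<theta>) < ln \<rho>}"
    by (intro open_Collect_less continuous_intros)
  then have I_open: "openin (top_of_set {0..}) I"
    unfolding I_def by (simp add: Collect_conj_eq openin_open_Int atLeast_def)
  have G_bound: "norm (G s v) \<le> 2 / cmod lam" if "s \<in> I" "Re v < ln r" for s v
    unfolding G_def using that by (intro norm_lift_field_le[OF set small \<theta>(1)]) (auto simp: I_def)
  have G_Re: "Re (G s v) \<le> 0" if "s \<in> I" "Re v < ln r" for s v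
    using Re_lift_field_neg[OF set small \<theta>, of "z0 + of_real s * \<theta>" v] that by (simp add: G_def I_def)
  have G_cont: "isCont (\<lambda>p. G (fst p) (snd p)) (s, v)" if "s \<in> I" "Re v < ln r" for s v
    unfolding G_def using that by (intro isCont_lift_field[OF set]) (auto simp: I_def)
  obtain w where w: "w 0 = w0" "\<And>t. t \<in> I \<Longrightarrow> Re (w t) \<le> Re w0"
    "\<And>t. t \<in> I \<Longrightarrow> (w has_vector_derivative G t (w t)) (at t within I)"
    using ode_solution_in_half_plane_exists[OF I_open w0 G_bound G_Re G_cont] by blast
  have "(z0 + of_real t * \<theta>, w t) \<in> Utilde \<rho> r" if "t \<in> I" for t
    using w(2)[OF that] w0 that by (simp add: I_def Utilde_def)
  then have "is_lift lam R \<rho> r z0 w0 \<theta> I w"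
    using z0 w by (auto simp: is_lift_def I_def G_def)
  then show ?thesis unfolding I_def by blast
qed

lemma Re_lift_in_beam_strict_antimono:
  assumes set: "standing_setting lam a R \<rho> r" and small: "normR a R \<rho> r * \<rho> ^ a < 1"
    and \<theta>: "cmod \<theta> = 1" "\<bar>Arg (\<theta> / (- lam / of_real (cmod lam)))\<bar> < arccos (normR a R \<rho> r * \<rho> ^ a)"
    and J: "is_interval J" and lift: "is_lift lam R \<rho> r z0 w0 \<theta> J w"
    and st: "s \<in> J" "t \<in> J" "s < t"
  shows "Re (w t) < Re (w s)"
proof (rule Re_strict_antimono_on_interval_if_derivative_neg[OF J st])
  fix x assume "x \<in> J"
  then show "(w has_vector_derivative \<theta> / lam * (1 + R (exp (z0 + of_real x * \<theta>)) (exp (w x))))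
      (at x within J)"
    and "Re (\<theta> / lam * (1 + R (exp (z0 + of_real x * \<theta>)) (exp (w x)))) < 0"
    using lift Re_lift_field_neg[OF set small \<theta>] by (auto simp: is_lift_def Utilde_def)
qed

lemma searchlight_beam_is_stability_beam:
  assumes set: "standing_setting lam a R \<rho> r" and small: "normR a R \<rho> r * \<rho> ^ a < 1"
    and \<delta>: "\<delta> < arccos (normR a R \<rho> r * \<rho> ^ a)"
    and p0: "(z0, w0) \<in> Utilde \<rho> r"
  shows "stability_beam lam R \<rho> r z0 w0 (- lam / of_real (cmod lam)) \<delta>"
  unfolding stability_beam_def Let_def
proof (intro allI impI conjI)
  fix \<theta> assume "cmod \<theta> = 1 \<and> \<bar>Arg (\<theta> / (- lam / of_real (cmod lam)))\<bar> < \<delta>"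
  then have \<theta>: "cmod \<theta> = 1" "\<bar>Arg (\<theta> / (- lam / of_real (cmod lam)))\<bar> < arccos (normR a R \<rho> r * \<rho> ^ a)"
    using \<delta> by auto
  show "\<exists>w. is_lift lam R \<rho> r z0 w0 \<theta> {t. 0 \<le> t \<and> Re (z0 + of_real t * \<theta>) < ln \<rho>} w"
    by (rule lift_in_beam_exists[OF set small \<theta> p0])
  fix J w assume "is_interval J \<and> J \<subseteq> {t. 0 \<le> t \<and> Re (z0 + of_real t * \<theta>) < ln \<rho>}
    \<and> is_lift lam R \<rho> r z0 w0 \<theta> J w"
  then show "\<forall>s\<in>J. \<forall>t\<in>J. s < t \<longrightarrow> Re (w t) < Re (w s)"
    using Re_lift_in_beam_strict_antimono[OF set small \<theta>] by blast
qed

lemma lift_deviation_has_vector_derivative: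
  assumes lift: "is_lift lam R \<rho> r z0 w0 \<theta> J w" and s: "s \<in> J"
  shows "((\<lambda>s. w s - w0 - of_real s * \<theta> / lam) has_vector_derivative
           \<theta> / lam * R (exp (z0 + of_real s * \<theta>)) (exp (w s))) (at s within J)"
proof -
  have "(w has_vector_derivative \<theta> / lam * (1 + R (exp (z0 + of_real s * \<theta>)) (exp (w s)))) (at s within J)"
    using lift s by (simp add: is_lift_def)
  moreover have "((\<lambda>s. of_real s * \<theta> / lam) has_vector_derivative \<theta> / lam) (at s within J)"
    by (auto intro!: derivative_eq_intros simp: has_real_derivative_iff_has_vector_derivative[symmetric])
  ultimately show ?thesis
    by (auto intro!: derivative_eq_intros simp: algebra_simps)
qed

lemma norm_lift_deviation_le:
  assumes set: "standing_setting lam a R \<rho> r" and \<theta>: "cmod \<theta> = 1"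
    and J: "is_interval J" "J \<subseteq> {0..}" and lift: "is_lift lam R \<rho> r z0 w0 \<theta> J w" and t: "t \<in> J"
    and \<phi>: "\<And>s. (\<phi> has_real_derivative
                normR a R \<rho> r * exp (real a * Re z0) / cmod lam * exp (real a * s * Re \<theta>)) (at s)"
  shows "cmod (w t - w0 - of_real t * \<theta> / lam) \<le> \<phi> t - \<phi> 0"
proof -
  have lam: "lam \<noteq> 0" using set by (simp add: standing_setting_def)
  have J0: "0 \<in> J" "w 0 = w0" using lift by (auto simp: is_lift_def)
  have "norm ((w t - w0 - of_real t * \<theta> / lam) - (w 0 - w0 - of_real 0 * \<theta> / lam)) \<le> \<phi> t - \<phi> 0"
  proof (rule norm_diff_le_on_interval_if_derivative_bound[OF J(1) J0(1) t _ _ \<phi>])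
    show "0 \<le> t" using J t by auto
    fix s assume s: "s \<in> J"
    show "((\<lambda>s. w s - w0 - of_real s * \<theta> / lam) has_vector_derivative
           \<theta> / lam * R (exp (z0 + of_real s * \<theta>)) (exp (w s))) (at s within J)"
      by (rule lift_deviation_has_vector_derivative[OF lift s])
    have U: "Re (z0 + of_real s * \<theta>) < ln \<rho>" "Re (w s) < ln r"
      using lift s by (auto simp: is_lift_def Utilde_def)
    have "cmod (\<theta> / lam * R (exp (z0 + of_real s * \<theta>)) (exp (w s)))
        \<le> normR a R \<rho> r * exp (real a * Re (z0 + of_real s * \<theta>)) / cmod lam"
      using norm_R_exp_le[OF set U] \<theta> lam by (simp add: norm_mult norm_divide divide_right_mono)
    then show "cmod (\<theta> / lam * R (exp (z0 + of_real s * \<theta>)) (exp (w s)))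
        \<le> normR a R \<rho> r * exp (real a * Re z0) / cmod lam * exp (real a * s * Re \<theta>)"
      by (simp add: algebra_simps exp_add[symmetric])
  qed
  then show ?thesis using J0(2) by simp
qed

lemma lift_deviation_le_exp:
  assumes set: "standing_setting lam a R \<rho> r" and \<theta>: "cmod \<theta> = 1" "Re \<theta> \<noteq> 0"
    and J: "is_interval J" "J \<subseteq> {0..}" and lift: "is_lift lam R \<rho> r z0 w0 \<theta> J w" and t: "t \<in> J"
  shows "cmod (w t - w0 - of_real t * \<theta> / lam)
           \<le> exp (real a * Re z0) / (cmod lam * \<bar>Re \<theta>\<bar> * real a)
               * normR a R \<rho> r * \<bar>1 - exp (real a * t * Re \<theta>)\<bar>"
proof -
  define C where "C = normR a R \<rho> r * exp (real a * Re z0) / cmod lam"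
  define c where "c = real a * Re \<theta>"
  have c: "c \<noteq> 0" using \<theta>(2) set by (simp add: c_def standing_setting_def)
  have lam: "lam \<noteq> 0" using set by (simp add: standing_setting_def)
  have "cmod (w t - w0 - of_real t * \<theta> / lam)
      \<le> C * (exp (c * t) - 1) / c - C * (exp (c * 0) - 1) / c"
  proof (rule norm_lift_deviation_le[OF set \<theta>(1) J lift t])
    fix s show "((\<lambda>s. C * (exp (c * s) - 1) / c) has_real_derivative
        normR a R \<rho> r * exp (real a * Re z0) / cmod lam * exp (real a * s * Re \<theta>)) (at s)"
      using c lam by (auto intro!: derivative_eq_intros simp: C_def c_def field_simps)
  qed
  also have "C * (exp (c * t) - 1) / c - C * (exp (c * 0) - 1) / c = C * ((exp (c * t) - 1) / c)"
    by simp
  also have "(exp (c * t) - 1) / c = \<bar>1 - exp (c * t)\<bar> / \<bar>c\<bar>"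
  proof (cases "0 < c")
    case True
    then have "1 \<le> exp (c * t)" using J t by auto
    then show ?thesis using True by simp
  next
    case False
    then have "c < 0" "exp (c * t) \<le> 1" using c J t by (auto simp: mult_nonpos_nonneg)
    then have "\<bar>1 - exp (c * t)\<bar> / \<bar>c\<bar> = (1 - exp (c * t)) / (- c)" by simp
    then show ?thesis using c by (simp add: field_simps)
  qed
  also have "C * (\<bar>1 - exp (c * t)\<bar> / \<bar>c\<bar>)
      = exp (real a * Re z0) / (cmod lam * \<bar>Re \<theta>\<bar> * real a) * normR a R \<rho> r
          * \<bar>1 - exp (real a * t * Re \<theta>)\<bar>"
    by (simp add: C_def c_def abs_mult mult_ac)
  finally show ?thesis .
qed

lemma lift_deviation_le_linear:
  assumes set: "standing_setting lam a R \<rho> r" and \<theta>: "cmod \<theta> = 1" "Re \<theta> = 0"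
    and J: "is_interval J" "J \<subseteq> {0..}" and lift: "is_lift lam R \<rho> r z0 w0 \<theta> J w" and t: "t \<in> J"
  shows "cmod (w t - w0 - of_real t * \<theta> / lam) \<le> exp (real a * Re z0) / cmod lam * t * normR a R \<rho> r"
proof -
  define C where "C = normR a R \<rho> r * exp (real a * Re z0) / cmod lam"
  have lam: "lam \<noteq> 0" using set by (simp add: standing_setting_def)
  have "cmod (w t - w0 - of_real t * \<theta> / lam) \<le> C * t - C * 0"
    by (rule norm_lift_deviation_le[OF set \<theta>(1) J lift t])
      (use \<theta>(2) lam in \<open>auto intro!: derivative_eq_intros simp: C_def\<close>)
  then show ?thesis by (simp add: C_def mult_ac)
qed

theorem mainTheorem10:
  fixes lam :: complex and a :: nat and R :: "complex \<Rightarrow> complex \<Rightarrow> complex"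
    and \<rho> r \<delta> :: real
  assumes setting: "standing_setting lam a R \<rho> r"
    and small: "normR a R \<rho> r * \<rho> ^ a < 1"
    and delta: "0 < \<delta>" "\<delta> < arccos (normR a R \<rho> r * \<rho> ^ a)"
  shows "(\<forall>z0 w0. (z0, w0) \<in> Utilde \<rho> r \<longrightarrow>
            stability_beam lam R \<rho> r z0 w0 (- lam / of_real (cmod lam)) \<delta>)
       \<and> (\<forall>z0 w0 \<theta> J w. cmod \<theta> = 1 \<and> is_interval J \<and> J \<subseteq> {0..} \<and>
            is_lift lam R \<rho> r z0 w0 \<theta> J w \<longrightarrow>
            (\<forall>t\<in>J.
              (Re \<theta> \<noteq> 0 \<longrightarrow>
                 cmod (w t - w0 - of_real t * \<theta> / lam)
                   \<le> exp (real a * Re z0) / (cmod lam * \<bar>Re \<theta>\<bar> * real a)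
                       * normR a R \<rho> r * \<bar>1 - exp (real a * t * Re \<theta>)\<bar>) \<and>
              (Re \<theta> = 0 \<longrightarrow>
                 cmod (w t - w0 - of_real t * \<theta> / lam)
                   \<le> exp (real a * Re z0) / cmod lam * t * normR a R \<rho> r)))"
  using searchlight_beam_is_stability_beam[OF setting small delta(2)]
    lift_deviation_le_exp[OF setting] lift_deviation_le_linear[OF setting]
  by blast

end
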